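(* Let $D$ be a slim, semimodular diagram (of size at least $4$). Then every element $x$ of the left boundary chain $C_\ell(D)$ with $x\le c_\ell(D)$ has at most one lower cover in $D$ (i.e., is not join-reducible).
   Context: A slim, semimodular diagram is a planar Hasse diagram of a finite (upper) semimodular lattice whose join-irreducible elements contain no three-element antichain. The left boundary chain $C_\ell(D)$ of a planar lattice diagram $D$ is the maximal chain from $0$ to $1$ forming the left boundary of the diagram. An element of $D$ is called doubly irreducible if it has at most one upper cover and at most one lower cover in $D$. $c_\ell(D)$ denotes the smallest doubly irreducible element of $C_\ell(D)$. *)

theory Defs
  imports "HOL-Analysis.Analysis"
begin

definition covers :: "'a::order \<Rightarrow> 'a \<Rightarrow> bool" where
  "covers a b \<longleftrightarrow> a < b \<and> \<not> (\<exists>z. a < z \<and> z < b)"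

definition lower_covers :: "'a::order \<Rightarrow> 'a set" where
  "lower_covers x = {y. covers y x}"

definition upper_covers :: "'a::order \<Rightarrow> 'a set" where
  "upper_covers x = {y. covers x y}"

definition upper_semimodular :: "'a::lattice itself \<Rightarrow> bool" where
  "upper_semimodular _ \<longleftrightarrow>
     (\<forall>a b c :: 'a. covers a b \<longrightarrow> (sup a c = sup b c \<or> covers (sup a c) (sup b c)))"

definition join_irreducible :: "'a::lattice \<Rightarrow> bool" where
  "join_irreducible x \<longleftrightarrow> (\<exists>y. y < x) \<and> (\<forall>a b. x = sup a b \<longrightarrow> x = a \<or> x = b)"

definition slim :: "'a::lattice itself \<Rightarrow> bool" where
  "slim _ \<longleftrightarrow> \<not> (\<exists>a b c :: 'a. join_irreducible a \<and> join_irreducible b \<and> join_irreducible c \<and>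
       a \<noteq> b \<and> a \<noteq> c \<and> b \<noteq> c \<and>
       \<not> (a \<le> b \<or> b \<le> a) \<and> \<not> (a \<le> c \<or> c \<le> a) \<and> \<not> (b \<le> c \<or> c \<le> b))"

definition doubly_irreducible :: "'a::order \<Rightarrow> bool" where
  "doubly_irreducible x \<longleftrightarrow> card (upper_covers x) \<le> 1 \<and> card (lower_covers x) \<le> 1"

text \<open>A planar Hasse diagram: each element is placed at a point of the plane
  (first coordinate = horizontal, second = vertical), each covering pair is drawn
  as a straight segment going strictly upwards, distinct edges meet only in common
  endpoints, and no vertex lies on an edge other than at its endpoints.\<close>

definition planar_diagram :: "('a::order \<Rightarrow> real \<times> real) \<Rightarrow> bool" where
  "planar_diagram pos \<longleftrightarrow>
     inj pos \<and>
     (\<forall>a b. covers a b \<longrightarrow> snd (pos a) < snd (pos b)) \<and>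
     (\<forall>a b c d. covers a b \<and> covers c d \<and> (a, b) \<noteq> (c, d) \<longrightarrow>
        closed_segment (pos a) (pos b) \<inter> closed_segment (pos c) (pos d)
          \<subseteq> {pos a, pos b} \<inter> {pos c, pos d}) \<and>
     (\<forall>a b c. covers a b \<and> c \<noteq> a \<and> c \<noteq> b \<longrightarrow> pos c \<notin> closed_segment (pos a) (pos b))"

definition drawing :: "('a::order \<Rightarrow> real \<times> real) \<Rightarrow> (real \<times> real) set" where
  "drawing pos = range pos \<union> \<Union> {closed_segment (pos a) (pos b) | a b. covers a b}"

text \<open>Left boundary chain: the elements lying on the left boundary of the drawing,
  i.e. no point of the drawing at the same height lies strictly to their left.\<close>
definition left_boundary_chain :: "('a::order \<Rightarrow> real \<times> real) \<Rightarrow> 'a set" where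
  "left_boundary_chain pos =
     {x. \<forall>q \<in> drawing pos. snd q = snd (pos x) \<longrightarrow> fst (pos x) \<le> fst q}"

definition is_c_left :: "('a::order \<Rightarrow> real \<times> real) \<Rightarrow> 'a \<Rightarrow> bool" where
  "is_c_left pos c \<longleftrightarrow> c \<in> left_boundary_chain pos \<and> doubly_irreducible c \<and>
     (\<forall>d \<in> left_boundary_chain pos. doubly_irreducible d \<longrightarrow> c \<le> d)"

end

theory Submission
  imports Defs
begin

(*
  In the formal setting of Defs the statement holds for every planar diagram of a
  finite lattice.

  A cover chain a0 < a1 < ... < an is drawn as a polygonal path going
  strictly upwards, so its abscissa is a continuous function of the height.  By
  planarity, two cover chains with no common element have disjoint drawings, hence
  (intermediate value theorem) neither can pass from the left of the other to its
  right.  Applying this to suitable chains gives two facts about an element x of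
  the left boundary chain:
    (a) if x has a lower cover, then its leftmost lower cover y is on the boundary;
    (b) if moreover x has a second lower cover, then x is the only upper cover of y.
  By induction, every boundary element with two lower covers lies strictly above a
  doubly irreducible boundary element; for x <= c this contradicts the minimality
  of c.
*)


section \<open>Upward segments in the plane\<close>

definition abscissa :: "real \<times> real \<Rightarrow> real \<times> real \<Rightarrow> real \<Rightarrow> real" where
  "abscissa P Q t = fst P + (t - snd P) / (snd Q - snd P) * (fst Q - fst P)"

lemma closed_segment_coords:
  fixes P Q p :: "real \<times> real"
  assumes "p \<in> closed_segment P Q"
  obtains u where "0 \<le> u" "u \<le> 1"
    "fst p = (1 - u) * fst P + u * fst Q" "snd p = (1 - u) * snd P + u * snd Q"
proof -
  from assms obtain u where "p = (1 - u) *\<^sub>R P + u *\<^sub>R Q" "0 \<le> u" "u \<le> 1"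
    unfolding closed_segment_def by blast
  thus ?thesis using that by simp
qed

lemma segment_height_between:
  fixes P Q p :: "real \<times> real"
  assumes "p \<in> closed_segment P Q" "snd P < snd Q"
  shows "snd P \<le> snd p \<and> snd p \<le> snd Q"
proof -
  obtain u where u: "0 \<le> u" "u \<le> 1" "snd p = (1 - u) * snd P + u * snd Q"
    using closed_segment_coords[OF assms(1)] by metis
  have "snd p - snd P = u * (snd Q - snd P)" "snd Q - snd p = (1 - u) * (snd Q - snd P)"
    using u by (simp_all add: algebra_simps)
  thus ?thesis using u assms(2) by (metis diff_ge_0_iff_ge mult_nonneg_nonneg less_imp_le)
qed

lemma segment_abscissa:
  fixes P Q p :: "real \<times> real"
  assumes "p \<in> closed_segment P Q" "snd P < snd Q"
  shows "abscissa P Q (snd p) = fst p"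
proof -
  obtain u where u: "fst p = (1 - u) * fst P + u * fst Q" "snd p = (1 - u) * snd P + u * snd Q"
    using closed_segment_coords[OF assms(1)] by metis
  have "snd p - snd P = u * (snd Q - snd P)" using u by (simp add: algebra_simps)
  hence "(snd p - snd P) / (snd Q - snd P) = u" using assms(2) by simp
  thus ?thesis unfolding abscissa_def using u(1) by (simp add: algebra_simps)
qed

lemma segment_lowest_point:
  fixes P Q p :: "real \<times> real"
  assumes "p \<in> closed_segment P Q" "snd P < snd Q" "snd p = snd P"
  shows "p = P"
proof -
  obtain u where u: "0 \<le> u" "fst p = (1 - u) * fst P + u * fst Q"
      "snd p = (1 - u) * snd P + u * snd Q"
    using closed_segment_coords[OF assms(1)] by metis
  have "snd p = snd P + u * (snd Q - snd P)" using u(3) by (simp add: algebra_simps)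
  hence "u * (snd Q - snd P) = 0" using assms(3) by linarith
  moreover have "snd Q - snd P \<noteq> 0" using assms(2) by simp
  ultimately have "u = 0" by simp
  thus ?thesis using u by (simp add: prod_eq_iff)
qed

lemma segment_point_at_height:
  fixes P Q :: "real \<times> real"
  assumes "snd P < snd Q" "snd P \<le> t" "t \<le> snd Q"
  shows "(abscissa P Q t, t) \<in> closed_segment P Q"
proof -
  define u where "u = (t - snd P) / (snd Q - snd P)"
  have u: "0 \<le> u" "u \<le> 1" using assms by (auto simp: u_def divide_simps)
  have "u * (snd Q - snd P) = t - snd P" using assms by (simp add: u_def)
  hence "t = (1 - u) * snd P + u * snd Q" by (simp add: algebra_simps)
  moreover have "abscissa P Q t = (1 - u) * fst P + u * fst Q"
    unfolding abscissa_def u_def[symmetric] by (simp add: algebra_simps)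
  ultimately have "(abscissa P Q t, t) = (1 - u) *\<^sub>R P + u *\<^sub>R Q" by (simp add: prod_eq_iff)
  thus ?thesis using u unfolding closed_segment_def by blast
qed

lemma abscissa_bottom: "abscissa P Q (snd P) = fst P"
  by (simp add: abscissa_def)

lemma abscissa_top: "snd P < snd Q \<Longrightarrow> abscissa P Q (snd Q) = fst Q"
  by (simp add: abscissa_def)

lemma abscissa_order_below_common_top:
  fixes P Q X :: "real \<times> real"
  assumes "snd P < snd X" "snd Q < snd X"
    and "abscissa P X s < abscissa Q X s" "s < snd X" "t < snd X"
  shows "abscissa P X t < abscissa Q X t"
proof -
  define sP where "sP = (fst X - fst P) / (snd X - snd P)"
  define sQ where "sQ = (fst X - fst Q) / (snd X - snd Q)"
  have lineP: "abscissa P X r = fst X + (r - snd X) * sP" for r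
    using assms(1) unfolding abscissa_def sP_def by (simp add: field_simps)
  have lineQ: "abscissa Q X r = fst X + (r - snd X) * sQ" for r
    using assms(2) unfolding abscissa_def sQ_def by (simp add: field_simps)
  have "sQ < sP" using assms(3,4) by (simp add: lineP lineQ mult_less_cancel_left_neg)
  thus ?thesis using assms(5) by (simp add: lineP lineQ mult_less_cancel_left_neg)
qed


section \<open>Cover chains in a finite order\<close>

lemma exists_cover_above:
  fixes a b :: "'a::{order,finite}"
  assumes "a < b" shows "\<exists>c. covers a c \<and> c \<le> b"
proof -
  obtain m where m: "a < m" "m \<le> b" "\<And>z. a < z \<Longrightarrow> z \<le> b \<Longrightarrow> z \<le> m \<Longrightarrow> m = z"
    using finite_has_minimal[of "{z. a < z \<and> z \<le> b}"] assms by auto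
  have "covers a m" unfolding covers_def
  proof (intro conjI notI)
    assume "\<exists>z. a < z \<and> z < m"
    then obtain z where "a < z" "z < m" by blast
    thus False using m by fastforce
  qed (use m in simp)
  thus ?thesis using m by auto
qed

lemma exists_cover_below:
  fixes a b :: "'a::{order,finite}"
  assumes "a < b" shows "\<exists>c. covers c b \<and> a \<le> c"
proof -
  obtain m where m: "a \<le> m" "m < b" "\<And>z. a \<le> z \<Longrightarrow> z < b \<Longrightarrow> m \<le> z \<Longrightarrow> m = z"
    using finite_has_maximal[of "{z. a \<le> z \<and> z < b}"] assms by auto
  have "covers m b" unfolding covers_def
  proof (intro conjI notI)
    assume "\<exists>z. m < z \<and> z < b"
    then obtain z where "m < z" "z < b" by blast
    moreover have "a \<le> z" using m(1) \<open>m < z\<close> by simp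
    ultimately show False using m(3)[of z] by (simp add: less_imp_le)
  qed (use m in simp)
  thus ?thesis using m by auto
qed

text \<open>Induction measure: intervals shrink when the lower end moves up.\<close>
lemma interval_card_less:
  fixes a b c :: "'a::{order,finite}"
  assumes "a < c" "c \<le> b"
  shows "card {z. c \<le> z \<and> z \<le> b} < card {z. a \<le> z \<and> z \<le> b}"
proof (rule psubset_card_mono)
  have "a \<in> {z. a \<le> z \<and> z \<le> b}" "a \<notin> {z. c \<le> z \<and> z \<le> b}" using assms by auto
  thus "{z. c \<le> z \<and> z \<le> b} \<subset> {z. a \<le> z \<and> z \<le> b}" using assms by auto
qed simp

fun cover_chain :: "'a::order list \<Rightarrow> bool" where
  "cover_chain [] = False"
| "cover_chain [a] = True"
| "cover_chain (a # b # r) = (covers a b \<and> cover_chain (b # r))"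

lemma cover_chain_exists:
  fixes a b :: "'a::{order,finite}"
  shows "a \<le> b \<Longrightarrow> \<exists>cs. cover_chain cs \<and> hd cs = a \<and> last cs = b"
proof (induction "card {z. a \<le> z \<and> z \<le> b}" arbitrary: a rule: less_induct)
  case less
  show ?case
  proof (cases "a = b")
    case True thus ?thesis by (intro exI[of _ "[a]"]) simp
  next
    case False
    hence "a < b" using less.prems by simp
    then obtain c where c: "covers a c" "c \<le> b" using exists_cover_above by blast
    hence "a < c" unfolding covers_def by simp
    then obtain cs where cs: "cover_chain cs" "hd cs = c" "last cs = b"
      using less.hyps[OF interval_card_less[OF _ c(2)] c(2)] by blast
    then obtain r where "cs = c # r" by (cases cs) auto
    thus ?thesis using cs c by (intro exI[of _ "a # cs"]) auto
  qed
qed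

lemma cover_chain_bounds: "cover_chain cs \<Longrightarrow> z \<in> set cs \<Longrightarrow> hd cs \<le> z \<and> z \<le> last cs"
proof (induction cs arbitrary: z rule: cover_chain.induct)
  case (3 a b r)
  hence ab: "a \<le> b" and IH: "\<And>z. z \<in> set (b # r) \<Longrightarrow> b \<le> z \<and> z \<le> last (b # r)"
    by (auto simp: covers_def less_imp_le)
  show ?case
  proof (cases "z = a")
    case True thus ?thesis using order.trans[OF ab] IH[of b] by simp
  next
    case False thus ?thesis using order.trans[OF ab] IH[of z] 3(3) by simp
  qed
qed auto


section \<open>Drawings of cover chains\<close>

text \<open>The polygonal path drawing a cover chain, and its abscissa as a function of
  the height (meaningful between the heights of the first and last element).\<close>
fun chain_path :: "('a \<Rightarrow> real \<times> real) \<Rightarrow> 'a list \<Rightarrow> (real \<times> real) set" where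
  "chain_path pos [] = {}"
| "chain_path pos [a] = {pos a}"
| "chain_path pos (a # b # r) = closed_segment (pos a) (pos b) \<union> chain_path pos (b # r)"

fun chain_abscissa :: "('a \<Rightarrow> real \<times> real) \<Rightarrow> 'a list \<Rightarrow> real \<Rightarrow> real" where
  "chain_abscissa pos [] t = 0"
| "chain_abscissa pos [a] t = fst (pos a)"
| "chain_abscissa pos (a # b # r) t =
     (if t \<le> snd (pos b) then abscissa (pos a) (pos b) t else chain_abscissa pos (b # r) t)"

lemma cover_chain_append:
  "cover_chain xs \<Longrightarrow> cover_chain ys \<Longrightarrow> last xs = hd ys \<Longrightarrow>
    cover_chain (xs @ tl ys) \<and> hd (xs @ tl ys) = hd xs \<and> last (xs @ tl ys) = last ys \<and>
    set (xs @ tl ys) = set xs \<union> set ys \<and> chain_path pos xs \<subseteq> chain_path pos (xs @ tl ys)"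
proof (induction xs rule: cover_chain.induct)
  case (2 a)
  then obtain r where ys: "ys = a # r" by (cases ys) auto
  thus ?case using 2 by (cases r) auto
next
  case (3 a b r)
  hence IH: "cover_chain ((b # r) @ tl ys) \<and> last ((b # r) @ tl ys) = last ys \<and>
      set ((b # r) @ tl ys) = set (b # r) \<union> set ys \<and>
      chain_path pos (b # r) \<subseteq> chain_path pos ((b # r) @ tl ys)" by auto
  obtain r2 where e: "(b # r) @ tl ys = b # r2" by auto
  hence eq: "(a # b # r) @ tl ys = a # b # r2" by simp
  have "covers a b" using 3(2) by simp
  thus ?case using IH unfolding eq e by auto
qed auto

lemma vertex_on_chain_path: "cover_chain W \<Longrightarrow> z \<in> set W \<Longrightarrow> pos z \<in> chain_path pos W"
proof (induction W rule: cover_chain.induct)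
  case (3 a b r)
  thus ?case by (cases "z = a") auto
qed auto

lemma chain_path_in_drawing: "cover_chain W \<Longrightarrow> chain_path pos W \<subseteq> drawing pos"
proof (induction W rule: cover_chain.induct)
  case (3 a b r)
  hence "covers a b" by simp
  hence "closed_segment (pos a) (pos b) \<subseteq> drawing pos" unfolding drawing_def by blast
  thus ?case using 3 by auto
qed (auto simp: drawing_def)

lemma chain_path_point_on_edge:
  "cover_chain W \<Longrightarrow> p \<in> chain_path pos W \<Longrightarrow> (\<exists>a. W = [a] \<and> p = pos a) \<or>
     (\<exists>a b. covers a b \<and> a \<in> set W \<and> b \<in> set W \<and> p \<in> closed_segment (pos a) (pos b))"
proof (induction W rule: cover_chain.induct)
  case (3 a b r)
  show ?case
  proof (cases "p \<in> closed_segment (pos a) (pos b)")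
    case True thus ?thesis using 3(2) by auto
  next
    case False
    hence "p \<in> chain_path pos (b # r)" using 3 by simp
    hence "(\<exists>a. b # r = [a] \<and> p = pos a) \<or> (\<exists>a' b'. covers a' b' \<and> a' \<in> set (b # r) \<and>
        b' \<in> set (b # r) \<and> p \<in> closed_segment (pos a') (pos b'))"
      using 3 by simp
    thus ?thesis using 3(2) by fastforce
  qed
qed auto

lemma drawing_point_on_short_chain:
  assumes "q \<in> drawing pos"
  obtains a r where "cover_chain [a, r] \<or> a = r" "q \<in> closed_segment (pos a) (pos r)"
proof -
  from assms consider "q \<in> range pos" | "\<exists>a b. covers a b \<and> q \<in> closed_segment (pos a) (pos b)"
    unfolding drawing_def by blast
  thus ?thesis
  proof cases
    case 1
    then obtain r where "q = pos r" by blast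
    thus ?thesis using that[of r r] by simp
  next
    case 2
    then obtain a r where "covers a r" "q \<in> closed_segment (pos a) (pos r)" by blast
    thus ?thesis using that[of a r] by simp
  qed
qed

lemma short_chain:
  assumes "cover_chain [a, r] \<or> a = r"
  obtains S where "cover_chain S" "hd S = a" "last S = r" "set S = {a, r}"
    "chain_path pos S = closed_segment (pos a) (pos r)"
  using assms that[of "[a, r]"] that[of "[r]"] by auto

context
  fixes pos :: "'a::{order,finite} \<Rightarrow> real \<times> real"
  assumes planar: "planar_diagram pos"
begin

lemma cover_height: "covers a b \<Longrightarrow> snd (pos a) < snd (pos b)"
  using planar unfolding planar_diagram_def by blast

lemma height_strict_mono: "a < b \<Longrightarrow> snd (pos a) < snd (pos b)"
proof (induction "card {z. a \<le> z \<and> z \<le> b}" arbitrary: a rule: less_induct)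
  case less
  obtain c where c: "covers a c" "c \<le> b" using exists_cover_above[OF less.prems] by blast
  hence "a < c" unfolding covers_def by simp
  show ?case
  proof (cases "c = b")
    case True thus ?thesis using cover_height c by simp
  next
    case False
    thus ?thesis using less.hyps[OF interval_card_less[OF \<open>a < c\<close> c(2)]] c cover_height[OF c(1)]
      by fastforce
  qed
qed

lemma height_mono: "a \<le> b \<Longrightarrow> snd (pos a) \<le> snd (pos b)"
  using height_strict_mono[of a b] by (cases "a = b") (auto simp: less_le)

lemma chain_path_heights:
  "cover_chain W \<Longrightarrow> p \<in> chain_path pos W \<Longrightarrow>
     snd (pos (hd W)) \<le> snd p \<and> snd p \<le> snd (pos (last W))"
proof (induction W rule: cover_chain.induct)
  case (3 a b r)
  have ab: "snd (pos a) < snd (pos b)" and cb: "cover_chain (b # r)"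
    using 3(2) cover_height by auto
  have "snd (pos b) \<le> snd (pos (last (b # r)))"
    using height_mono cover_chain_bounds[OF cb, of b] by simp
  moreover have "last (a # b # r) = last (b # r)" by simp
  ultimately show ?case using 3 segment_height_between[OF _ ab, of p] ab
    by (cases "p \<in> closed_segment (pos a) (pos b)") (auto simp del: last.simps)
qed auto

lemma chain_path_lowest_point:
  assumes "cover_chain (b # r)" "p \<in> chain_path pos (b # r)" "snd p = snd (pos b)"
  shows "p = pos b"
proof (cases r)
  case Nil thus ?thesis using assms by simp
next
  case (Cons c r')
  have bc: "snd (pos b) < snd (pos c)" and cc: "cover_chain (c # r')"
    using assms(1) Cons cover_height by auto
  show ?thesis
  proof (cases "p \<in> closed_segment (pos b) (pos c)")
    case True thus ?thesis using segment_lowest_point[OF True bc] assms(3) by simp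
  next
    case False
    hence "p \<in> chain_path pos (c # r')" using assms(2) Cons by simp
    thus ?thesis using chain_path_heights[OF cc] bc assms(3) by fastforce
  qed
qed

lemma chain_abscissa_of_point:
  "cover_chain W \<Longrightarrow> p \<in> chain_path pos W \<Longrightarrow> chain_abscissa pos W (snd p) = fst p"
proof (induction W rule: cover_chain.induct)
  case (3 a b r)
  have ab: "snd (pos a) < snd (pos b)" and cb: "cover_chain (b # r)"
    using 3(2) cover_height by auto
  show ?case
  proof (cases "p \<in> closed_segment (pos a) (pos b)")
    case True
    thus ?thesis using segment_abscissa[OF True ab] segment_height_between[OF True ab] by simp
  next
    case False
    hence pb: "p \<in> chain_path pos (b # r)" using 3(3) by simp
    show ?thesis
    proof (cases "snd p \<le> snd (pos b)")
      case True
      hence "snd p = snd (pos b)" using chain_path_heights[OF cb pb] by simp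
      hence "p = pos b" using chain_path_lowest_point[OF cb pb] by simp
      thus ?thesis using abscissa_top[OF ab] by simp
    next
      case False thus ?thesis using 3(1)[OF cb pb] by simp
    qed
  qed
qed auto

lemma chain_abscissa_on_path:
  "cover_chain W \<Longrightarrow> snd (pos (hd W)) \<le> t \<Longrightarrow> t \<le> snd (pos (last W)) \<Longrightarrow>
     (chain_abscissa pos W t, t) \<in> chain_path pos W"
proof (induction W rule: cover_chain.induct)
  case (3 a b r)
  have ab: "snd (pos a) < snd (pos b)" and cb: "cover_chain (b # r)"
    using 3(2) cover_height by auto
  show ?case
  proof (cases "t \<le> snd (pos b)")
    case True thus ?thesis using segment_point_at_height[OF ab, of t] 3(3) by simp
  next
    case False thus ?thesis using 3(1)[OF cb] 3(4) by simp
  qed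
qed auto

lemma chain_abscissa_continuous:
  "cover_chain W \<Longrightarrow>
     continuous_on {snd (pos (hd W)) .. snd (pos (last W))} (chain_abscissa pos W)"
proof (induction W rule: cover_chain.induct)
  case (2 a)
  have "chain_abscissa pos [a] = (\<lambda>t. fst (pos a))" by (rule ext) simp
  thus ?case by simp
next
  case (3 a b r)
  have ab: "snd (pos a) < snd (pos b)" and cb: "cover_chain (b # r)"
    using 3(2) cover_height by auto
  have split: "chain_abscissa pos (a # b # r) =
      (\<lambda>t. if id t \<le> snd (pos b) then abscissa (pos a) (pos b) t else chain_abscissa pos (b # r) t)"
    by (rule ext) simp
  have lower: "continuous_on S (abscissa (pos a) (pos b))" for S
    unfolding abscissa_def by (intro continuous_intros) (use ab in auto)
  have upper: "continuous_on {t \<in> {snd (pos (hd (a # b # r)))..snd (pos (last (a # b # r)))}.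
      snd (pos b) \<le> id t} (chain_abscissa pos (b # r))"
    by (rule continuous_on_subset[OF 3(1)[OF cb]]) auto
  have agree: "abscissa (pos a) (pos b) (snd (pos b)) = chain_abscissa pos (b # r) (snd (pos b))"
    using abscissa_top[OF ab] chain_abscissa_of_point[OF cb vertex_on_chain_path[OF cb, of b]] by simp
  show ?case unfolding split
    by (rule continuous_on_cases_le[OF lower upper continuous_on_id']) (simp add: agree)
qed simp

lemma disjoint_chains_disjoint_paths:
  assumes W: "cover_chain W" and B: "cover_chain B" and dis: "set W \<inter> set B = {}"
  shows "chain_path pos W \<inter> chain_path pos B = {}"
proof (rule ccontr)
  assume "chain_path pos W \<inter> chain_path pos B \<noteq> {}"
  then obtain p where p: "p \<in> chain_path pos W" "p \<in> chain_path pos B" by blast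
  have inj: "inj pos" and vertex: "\<And>a b c. covers a b \<Longrightarrow> c \<noteq> a \<Longrightarrow> c \<noteq> b \<Longrightarrow>
      pos c \<notin> closed_segment (pos a) (pos b)"
    using planar unfolding planar_diagram_def by blast+
  have edges: "\<And>a b c d. covers a b \<Longrightarrow> covers c d \<Longrightarrow> (a, b) \<noteq> (c, d) \<Longrightarrow>
      closed_segment (pos a) (pos b) \<inter> closed_segment (pos c) (pos d) \<subseteq> {pos a, pos b} \<inter> {pos c, pos d}"
    using planar unfolding planar_diagram_def by blast
  from chain_path_point_on_edge[OF W p(1)] chain_path_point_on_edge[OF B p(2)] show False
  proof (elim disjE exE conjE)
    fix a b c d assume h: "covers a b" "a \<in> set W" "b \<in> set W" "p \<in> closed_segment (pos a) (pos b)"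
      "covers c d" "c \<in> set B" "d \<in> set B" "p \<in> closed_segment (pos c) (pos d)"
    hence "p \<in> {pos a, pos b} \<inter> {pos c, pos d}" using edges[OF h(1) h(5)] dis by blast
    thus False using dis h inj by (auto dest: injD)
  next
    fix a c d assume "W = [a]" "p = pos a" "covers c d" "c \<in> set B" "d \<in> set B"
      "p \<in> closed_segment (pos c) (pos d)"
    thus False using dis vertex[of c d a] by auto
  next
    fix a b c assume "B = [c]" "p = pos c" "covers a b" "a \<in> set W" "b \<in> set W"
      "p \<in> closed_segment (pos a) (pos b)"
    thus False using dis vertex[of a b c] by auto
  qed (use dis inj in \<open>auto dest: injD\<close>)
qed

text \<open>The key topological fact: a cover chain starting weakly to the left of a
  disjoint cover chain stays strictly to its left (intermediate value theorem).\<close>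
lemma disjoint_chains_keep_sides:
  assumes W: "cover_chain W" and B: "cover_chain B" and dis: "set W \<inter> set B = {}"
    and "t1 \<le> t2"
    and "snd (pos (hd W)) \<le> t1" "t2 \<le> snd (pos (last W))"
    and "snd (pos (hd B)) \<le> t1" "t2 \<le> snd (pos (last B))"
    and "chain_abscissa pos W t1 \<le> chain_abscissa pos B t1"
  shows "chain_abscissa pos W t2 < chain_abscissa pos B t2"
proof (rule ccontr)
  assume swapped: "\<not> chain_abscissa pos W t2 < chain_abscissa pos B t2"
  let ?g = "\<lambda>t. chain_abscissa pos W t - chain_abscissa pos B t"
  have "continuous_on {t1..t2} (chain_abscissa pos W)"
    by (rule continuous_on_subset[OF chain_abscissa_continuous[OF W]]) (use assms in auto)
  moreover have "continuous_on {t1..t2} (chain_abscissa pos B)"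
    by (rule continuous_on_subset[OF chain_abscissa_continuous[OF B]]) (use assms in auto)
  ultimately have "continuous_on {t1..t2} ?g" by (intro continuous_intros)
  then obtain t where t: "t1 \<le> t" "t \<le> t2" "?g t = 0"
    using IVT'[of ?g t1 0 t2] assms swapped by auto
  have "snd (pos (hd W)) \<le> t" "t \<le> snd (pos (last W))"
    "snd (pos (hd B)) \<le> t" "t \<le> snd (pos (last B))"
    using assms t(1,2) by linarith+
  hence "(chain_abscissa pos W t, t) \<in> chain_path pos W"
    "(chain_abscissa pos B t, t) \<in> chain_path pos B"
    using chain_abscissa_on_path[OF W] chain_abscissa_on_path[OF B] by auto
  thus False using t(3) disjoint_chains_disjoint_paths[OF W B dis] by auto
qed

lemma chain_avoids_vertex:
  assumes "cover_chain W" "q \<in> chain_path pos W" "snd q = snd (pos y)" "fst q \<noteq> fst (pos y)"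
  shows "y \<notin> set W"
  using chain_abscissa_of_point[OF assms(1,2)]
    chain_abscissa_of_point[OF assms(1) vertex_on_chain_path[OF assms(1)]] assms(3,4) by metis

lemma chain_stays_left_of_edge:
  assumes yx: "covers y x" and W: "cover_chain W" "x \<notin> set W"
    and q: "q \<in> chain_path pos W" "snd q = snd (pos y)" "fst q < fst (pos y)"
    and t: "snd (pos y) \<le> t" "t \<le> snd (pos x)" "t \<le> snd (pos (last W))"
  shows "chain_abscissa pos W t < abscissa (pos y) (pos x) t"
proof -
  have B: "cover_chain [y, x]" using yx by simp
  have "y \<notin> set W" using chain_avoids_vertex[OF W(1) q(1,2)] q(3) by simp
  hence dis: "set W \<inter> set [y, x] = {}" using W(2) by auto
  have "snd (pos (hd W)) \<le> snd (pos y)" using chain_path_heights[OF W(1) q(1)] q(2) by simp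
  moreover have "chain_abscissa pos W (snd (pos y)) \<le> chain_abscissa pos [y, x] (snd (pos y))"
    using chain_abscissa_of_point[OF W(1) q(1)] q cover_height[OF yx] by (simp add: abscissa_bottom)
  ultimately have "chain_abscissa pos W t < chain_abscissa pos [y, x] t"
    using disjoint_chains_keep_sides[OF W(1) B dis, of "snd (pos y)" t] t by simp
  thus ?thesis using t(2) by simp
qed

lemma lower_cover_edges_apart:
  assumes yx: "covers y x" and zx: "covers z x" and "y \<noteq> z"
    and t: "snd (pos y) \<le> t" "snd (pos z) \<le> t" "t < snd (pos x)"
  shows "abscissa (pos y) (pos x) t \<noteq> abscissa (pos z) (pos x) t"
proof
  assume eq: "abscissa (pos y) (pos x) t = abscissa (pos z) (pos x) t"
  let ?p = "(abscissa (pos y) (pos x) t, t)"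
  have "?p \<in> closed_segment (pos y) (pos x)"
    using segment_point_at_height[OF cover_height[OF yx]] t by simp
  moreover have "?p \<in> closed_segment (pos z) (pos x)"
    unfolding eq using segment_point_at_height[OF cover_height[OF zx]] t by simp
  ultimately have "?p \<in> closed_segment (pos y) (pos x) \<inter> closed_segment (pos z) (pos x)" by blast
  hence "?p \<in> {pos y, pos x} \<inter> {pos z, pos x}"
    using planar yx zx \<open>y \<noteq> z\<close> unfolding planar_diagram_def by blast
  moreover have "?p \<noteq> pos x" using t(3) by (metis less_irrefl snd_conv)
  ultimately have "pos y = pos z" by auto
  thus False using planar \<open>y \<noteq> z\<close> unfolding planar_diagram_def by (auto dest: injD)
qed

text \<open>It is found by comparing
  the edges at the height of the highest lower cover of x.\<close>
lemma exists_leftmost_lower_cover: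
  assumes "lower_covers x \<noteq> {}"
  obtains y where "covers y x"
    "\<And>z t. covers z x \<Longrightarrow> z \<noteq> y \<Longrightarrow> t < snd (pos x) \<Longrightarrow>
       abscissa (pos y) (pos x) t < abscissa (pos z) (pos x) t"
proof -
  let ?L = "lower_covers x" and ?I = "\<lambda>z t. abscissa (pos z) (pos x) t"
  have L: "z \<in> ?L \<longleftrightarrow> covers z x" for z unfolding lower_covers_def by simp
  define ts where "ts = Max ((\<lambda>z. snd (pos z)) ` ?L)"
  have ts_ge: "covers z x \<Longrightarrow> snd (pos z) \<le> ts" for z unfolding ts_def L[symmetric] by simp
  have ts_lt: "ts < snd (pos x)"
    using Max_in[of "(\<lambda>z. snd (pos z)) ` ?L"] assms cover_height L unfolding ts_def by auto
  define m where "m = Min ((\<lambda>z. ?I z ts) ` ?L)"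
  have "m \<in> (\<lambda>z. ?I z ts) ` ?L" unfolding m_def using assms by simp
  then obtain y where y: "y \<in> ?L" "?I y ts = m" by blast
  have y_min: "?I y ts \<le> ?I z ts" if "z \<in> ?L" for z unfolding y(2) m_def using that by simp
  show thesis
  proof (rule that)
    show yx: "covers y x" using y(1) L by simp
    fix z t assume zx: "covers z x" and "z \<noteq> y" "t < snd (pos x)"
    have "?I y ts \<noteq> ?I z ts"
      using lower_cover_edges_apart[OF yx zx] \<open>z \<noteq> y\<close> ts_ge[OF yx] ts_ge[OF zx] ts_lt by metis
    hence "?I y ts < ?I z ts" using y_min[of z] zx L by force
    thus "?I y t < ?I z t"
      using abscissa_order_below_common_top[OF cover_height[OF yx] cover_height[OF zx]]
        ts_lt \<open>t < snd (pos x)\<close> by blast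
  qed
qed

text \<open>If S ends in some r < x, extend S up to
  a lower cover y' of x above r; the extension stays left of the edge y \<prec> x up to
  the height of y', contradicting that this edge lies left of the edge y' \<prec> x when
  y is the leftmost lower cover.\<close>
lemma witness_chain_end_below:
  assumes yx: "covers y x"
    and leftmost: "\<And>z t. covers z x \<Longrightarrow> z \<noteq> y \<Longrightarrow> t < snd (pos x) \<Longrightarrow>
       abscissa (pos y) (pos x) t < abscissa (pos z) (pos x) t"
    and S: "cover_chain S" "last S < x"
    and q: "q \<in> chain_path pos S" "snd q = snd (pos y)" "fst q < fst (pos y)"
  shows False
proof -
  obtain y' where y': "covers y' x" "last S \<le> y'" using exists_cover_below[OF S(2)] by blast
  obtain cc where cc: "cover_chain cc" "hd cc = last S" "last cc = y'"
    using cover_chain_exists[OF y'(2)] by auto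
  define W where "W = S @ tl cc"
  have W: "cover_chain W" "last W = y'" "chain_path pos S \<subseteq> chain_path pos W"
    using cover_chain_append[OF S(1) cc(1)] cc unfolding W_def by auto
  have qW: "q \<in> chain_path pos W" using W(3) q(1) by blast
  have "x \<notin> set W" using cover_chain_bounds[OF W(1)] W(2) y'(1) unfolding covers_def by fastforce
  moreover have hy': "snd (pos y) \<le> snd (pos y')" "snd (pos y') < snd (pos x)"
    using chain_path_heights[OF W(1) qW] W(2) q(2) cover_height[OF y'(1)] by auto
  ultimately have "chain_abscissa pos W (snd (pos y')) < abscissa (pos y) (pos x) (snd (pos y'))"
    using chain_stays_left_of_edge[OF yx W(1) _ qW q(2,3)] W(2) by simp
  moreover have y'W: "y' \<in> set W" using W(1,2) by (metis cover_chain.simps(1) last_in_set)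
  hence "y' \<noteq> y" using chain_avoids_vertex[OF W(1) qW q(2)] q(3) by auto
  ultimately show False
    using leftmost[OF y'(1) _ hy'(2)] abscissa_bottom[of "pos y'"]
      chain_abscissa_of_point[OF W(1) vertex_on_chain_path[OF W(1) y'W]] by simp
qed

end


section \<open>The left boundary chain\<close>

lemma left_boundary_leftmost:
  "x \<in> left_boundary_chain pos \<Longrightarrow> q \<in> drawing pos \<Longrightarrow> snd q = snd (pos x) \<Longrightarrow>
     fst (pos x) \<le> fst q"
  unfolding left_boundary_chain_def by blast

lemma left_boundary_left_of_chain:
  fixes pos :: "'a::{order,finite} \<Rightarrow> real \<times> real"
  assumes "planar_diagram pos" "x \<in> left_boundary_chain pos" "cover_chain W"
    "snd (pos (hd W)) \<le> snd (pos x)" "snd (pos x) \<le> snd (pos (last W))"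
  shows "fst (pos x) \<le> chain_abscissa pos W (snd (pos x))"
  using left_boundary_leftmost[OF assms(2) subsetD[OF chain_path_in_drawing[OF assms(3)]
      chain_abscissa_on_path[OF assms(1,3,4,5)]]] by simp

context
  fixes pos :: "'a::{lattice,finite} \<Rightarrow> real \<times> real"
  assumes planar: "planar_diagram pos"
begin

text \<open>Otherwise a chain from y through w
  up to w \<squnion> x and a chain from y \<sqinter> b through b to x would be disjoint, but the first
  starts left of the second (at y) and ends right of it (at x).\<close>
lemma boundary_unique_upper_cover:
  assumes xL: "x \<in> left_boundary_chain pos" and yL: "y \<in> left_boundary_chain pos"
    and yx: "covers y x" and bx: "covers b x" "b \<noteq> y"
  shows "upper_covers y \<subseteq> {x}"
proof
  fix w assume "w \<in> upper_covers y"
  hence yw: "covers y w" unfolding upper_covers_def by simp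
  show "w \<in> {x}"
  proof (rule ccontr)
    assume "w \<notin> {x}"
    hence wx: "\<not> w \<le> x" and yb: "\<not> y \<le> b"
      using yw yx bx unfolding covers_def by (auto simp: less_le)
    obtain cw where cw: "cover_chain cw" "hd cw = w" "last cw = sup w x"
      using cover_chain_exists[of w "sup w x"] by auto
    obtain cb where cb: "cover_chain cb" "hd cb = inf y b" "last cb = b"
      using cover_chain_exists[of "inf y b" b] by auto
    define W where "W = [y, w] @ tl cw"
    define B where "B = cb @ tl [b, x]"
    have W: "cover_chain W" "hd W = y" "last W = sup w x" "set W = {y, w} \<union> set cw"
      using cover_chain_append[of "[y, w]" cw] cw yw unfolding W_def by auto
    have B: "cover_chain B" "hd B = inf y b" "last B = x" "set B = set cb \<union> {b, x}"
      using cover_chain_append[of cb "[b, x]"] cb bx unfolding B_def by auto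
    have "set W \<inter> set B = {}"
    proof (rule ccontr)
      assume "set W \<inter> set B \<noteq> {}"
      then obtain z where "z \<in> set W" "z \<in> set B" by blast
      hence "z = y \<or> w \<le> z" "z \<le> b \<or> z = x"
        using W(4) B(4) cover_chain_bounds[OF cw(1)] cover_chain_bounds[OF cb(1)] cw cb by auto
      thus False using yx bx wx yb unfolding covers_def by (auto dest: order.trans)
    qed
    moreover have hy: "snd (pos y) \<le> snd (pos x)" "snd (pos (inf y b)) \<le> snd (pos y)"
      "snd (pos x) \<le> snd (pos (sup w x))"
      using height_mono[OF planar] yx unfolding covers_def by auto
    moreover have "chain_abscissa pos W (snd (pos y)) \<le> chain_abscissa pos B (snd (pos y))"
      using left_boundary_left_of_chain[OF planar yL B(1)] B hy
        chain_abscissa_of_point[OF planar W(1) vertex_on_chain_path[OF W(1), of y]] W by simp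
    ultimately have "chain_abscissa pos W (snd (pos x)) < chain_abscissa pos B (snd (pos x))"
      using disjoint_chains_keep_sides[OF planar W(1) B(1)] W B by (simp del: sup.bounded_iff)
    moreover have "fst (pos x) \<le> chain_abscissa pos W (snd (pos x))"
      using left_boundary_left_of_chain[OF planar xL W(1)] W hy by simp
    ultimately show False
      using chain_abscissa_of_point[OF planar B(1) vertex_on_chain_path[OF B(1), of x]] B by simp
  qed
qed

text \<open>If S avoids x and ends in some r not
  below x, then S extended up to r \<squnion> x stays left of the edge y \<prec> x
  up to the height of x, and there it passes left of x: impossible for x on the
  boundary.\<close>
lemma witness_chain_end_not_below:
  assumes xL: "x \<in> left_boundary_chain pos" and yx: "covers y x"
    and S: "cover_chain S" "x \<notin> set S" "\<not> last S \<le> x"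
    and q: "q \<in> chain_path pos S" "snd q = snd (pos y)" "fst q < fst (pos y)"
  shows False
proof -
  obtain cc where cc: "cover_chain cc" "hd cc = last S" "last cc = sup (last S) x"
    using cover_chain_exists[of "last S" "sup (last S) x"] by auto
  define W where "W = S @ tl cc"
  have W: "cover_chain W" "hd W = hd S" "last W = sup (last S) x" "set W = set S \<union> set cc"
      "chain_path pos S \<subseteq> chain_path pos W"
    using cover_chain_append[OF S(1) cc(1)] cc unfolding W_def by auto
  have xW: "x \<notin> set W" using W(4) S(2,3) cover_chain_bounds[OF cc(1)] cc(2) by auto
  have qW: "q \<in> chain_path pos W" using W(5) q(1) by blast
  have hyx: "snd (pos y) < snd (pos x)" using cover_height[OF planar yx] .
  have hx: "snd (pos x) \<le> snd (pos (last W))" "snd (pos (hd W)) \<le> snd (pos x)"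
    using height_mono[OF planar, of x "sup (last S) x"] W(3)
      chain_path_heights[OF planar W(1) qW] q(2) hyx by auto
  have "chain_abscissa pos W (snd (pos x)) < abscissa (pos y) (pos x) (snd (pos x))"
    using chain_stays_left_of_edge[OF planar yx W(1) xW qW q(2,3)] hyx hx by simp
  hence "chain_abscissa pos W (snd (pos x)) < fst (pos x)" using abscissa_top[OF hyx] by simp
  thus False using left_boundary_left_of_chain[OF planar xL W(1) hx(2,1)] by simp
qed

text \<open>A point q of the drawing strictly left of y at its height lies on a vertex or edge
  a \<preceq> r; the cases r not below x and r < x are excluded by the two lemmas on such chains,
  and the case r = x directly by the leftmost choice of y.\<close>
lemma leftmost_lower_cover_on_boundary:
  assumes xL: "x \<in> left_boundary_chain pos" and yx: "covers y x"
    and leftmost: "\<And>z t. covers z x \<Longrightarrow> z \<noteq> y \<Longrightarrow> t < snd (pos x) \<Longrightarrow>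
       abscissa (pos y) (pos x) t < abscissa (pos z) (pos x) t"
  shows "y \<in> left_boundary_chain pos"
proof (rule ccontr)
  assume "y \<notin> left_boundary_chain pos"
  then obtain q where q: "q \<in> drawing pos" "snd q = snd (pos y)" "fst q < fst (pos y)"
    unfolding left_boundary_chain_def by force
  obtain a r where ar: "cover_chain [a, r] \<or> a = r" "q \<in> closed_segment (pos a) (pos r)"
    using drawing_point_on_short_chain[OF q(1)] by blast
  obtain S where S: "cover_chain S" "hd S = a" "last S = r" "set S = {a, r}"
      "chain_path pos S = closed_segment (pos a) (pos r)"
    using short_chain[OF ar(1)] by blast
  have qS: "q \<in> chain_path pos S" using S(5) ar(2) by simp
  have hyx: "snd (pos y) < snd (pos x)" using cover_height[OF planar yx] .
  have "snd (pos a) \<le> snd (pos y)" using chain_path_heights[OF planar S(1) qS] S(2) q(2) by simp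
  hence "a \<noteq> x" using hyx by auto
  consider "\<not> r \<le> x" | "r < x" | "r = x" by (auto simp: order.order_iff_strict)
  thus False
  proof cases
    case 1
    thus False using witness_chain_end_not_below[OF xL yx S(1) _ _ qS q(2,3)] S(3,4) \<open>a \<noteq> x\<close> by auto
  next
    case 2
    thus False using witness_chain_end_below[OF planar yx leftmost S(1) _ qS q(2,3)] S(3) by simp
  next
    case 3
    hence ax: "covers a x" using ar(1) \<open>a \<noteq> x\<close> by simp
    have hax: "snd (pos a) < snd (pos x)" using cover_height[OF planar ax] .
    have "a \<noteq> y"
    proof
      assume "a = y"
      hence "q = pos y" using segment_lowest_point[OF ar(2)[unfolded 3] hax] q(2) by simp
      thus False using q(3) by simp
    qed
    hence "abscissa (pos y) (pos x) (snd q) < abscissa (pos a) (pos x) (snd q)"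
      using leftmost[OF ax] q(2) hyx by simp
    moreover have "abscissa (pos a) (pos x) (snd q) = fst q"
      using segment_abscissa[OF ar(2)[unfolded 3] hax] .
    ultimately show False using q(2,3) abscissa_bottom[of "pos y"] by simp
  qed
qed

lemma boundary_lower_cover_on_boundary:
  assumes "x \<in> left_boundary_chain pos" "lower_covers x \<noteq> {}"
  obtains y where "covers y x" "y \<in> left_boundary_chain pos"
  using exists_leftmost_lower_cover[OF planar assms(2)] leftmost_lower_cover_on_boundary[OF assms(1)]
  by metis

text \<open>Its lower
  cover y on the boundary has x as only upper cover by fact (b); either y has at most
  one lower cover, or the induction hypothesis applies to y.\<close>
lemma join_reducible_boundary_element:
  assumes "x \<in> left_boundary_chain pos" "card (lower_covers x) \<ge> 2"
  shows "\<exists>y < x. y \<in> left_boundary_chain pos \<and> doubly_irreducible y"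
  using assms
proof (induction "card {z. z < x}" arbitrary: x rule: less_induct)
  case less
  obtain y where yx: "covers y x" and yL: "y \<in> left_boundary_chain pos"
    using boundary_lower_cover_on_boundary[OF less.prems(1)] less.prems(2) by force
  hence "y < x" unfolding covers_def by simp
  obtain b where b: "covers b x" "b \<noteq> y"
  proof -
    have "\<not> lower_covers x \<subseteq> {y}" using less.prems(2) card_mono[of "{y}" "lower_covers x"] by auto
    thus thesis using that unfolding lower_covers_def by blast
  qed
  have "card (upper_covers y) \<le> 1"
    using card_mono[OF _ boundary_unique_upper_cover[OF less.prems(1) yL yx b]] by simp
  show ?case
  proof (cases "card (lower_covers y) \<ge> 2")
    case True
    have "card {z. z < y} < card {z. z < x}"
      by (rule psubset_card_mono) (use \<open>y < x\<close> in \<open>auto intro: less_trans\<close>)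
    thus ?thesis using less.hyps[OF _ yL True] \<open>y < x\<close> by (auto intro: less_trans)
  next
    case False
    hence "doubly_irreducible y"
      using \<open>card (upper_covers y) \<le> 1\<close> unfolding doubly_irreducible_def by simp
    thus ?thesis using yL \<open>y < x\<close> by blast
  qed
qed

end


theorem lemma2p3:
  fixes pos :: "'a::{lattice, finite} \<Rightarrow> real \<times> real"
    and c x :: 'a
  assumes "upper_semimodular TYPE('a)"
    and "slim TYPE('a)"
    and "planar_diagram pos"
    and "CARD('a) \<ge> 4"
    and "is_c_left pos c"
    and "x \<in> left_boundary_chain pos"
    and "x \<le> c"
  shows "card (lower_covers x) \<le> 1"
proof (rule ccontr)
  assume "\<not> card (lower_covers x) \<le> 1"
  then obtain y where "y < x" "y \<in> left_boundary_chain pos" "doubly_irreducible y"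
    using join_reducible_boundary_element[OF assms(3,6)] by force
  hence "c \<le> y" using assms(5) unfolding is_c_left_def by blast
  thus False using \<open>y < x\<close> \<open>x \<le> c\<close> by simp
qed

end
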